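(* Let $N_1,N_3,J,L\in\mathbb{N}$ and let $\hat{\mathcal{X}}\in\mathbb{R}^{N_1\times J\times N_3\times L}$ be a real fourth-order tensor with slices $\hat{\mathcal{X}}_{jl}\in\mathbb{R}^{N_1\times N_3}$ given by $(\hat{\mathcal{X}}_{jl})_{ik}=\hat{\mathcal{X}}_{ijkl}$. Consider all factorizations $\hat{\mathcal{X}}_{jl}=\mathbf{U}(\mathbf{R}_j\mathbf{T}_l)\mathbf{V}^\top$ for all $j=1,\dots,J$, $l=1,\dots,L$, where $D\in\mathbb{N}$ is arbitrary, $\mathbf{U}\in\mathbb{R}^{N_1\times D}$, $\mathbf{V}\in\mathbb{R}^{N_3\times D}$, and $\mathbf{R}_j,\mathbf{T}_l\in\mathbb{R}^{D\times D}$ are real diagonal matrices. Then $$\|\hat{\mathcal{X}}\|_*=\min_{\substack{D,\ \mathbf{U},\mathbf{V},(\mathbf{R}_j),(\mathbf{T}_l):\\ \hat{\mathcal{X}}_{jl}=\mathbf{U}(\mathbf{R}_j\mathbf{T}_l)\mathbf{V}^\top\ \forall j,l}}\ \frac{1}{4\sqrt{JL}}\sum_{l=1}^{L}\sum_{j=1}^{J}\Big(\|\mathbf{U}\mathbf{R}_j\mathbf{T}_l\|_F^2+\|\mathbf{V}\|_F^2+\|\mathbf{V}(\mathbf{R}_j\mathbf{T}_l)^\top\|_F^2+\|\mathbf{U}\|_F^2\Big).$$ Moreover, every factorization attaining this minimum satisfies, for every $d\in\{1,\dots,D\}$, $$\|\mathbf{u}_{:d}\|_2\|\mathbf{r}_{:d}\|_2\|\mathbf{t}_{:d}\|_2=\sqrt{JL}\,\|\mathbf{v}_{:d}\|_2\quad\text{and}\quad\|\mathbf{v}_{:d}\|_2\|\mathbf{r}_{:d}\|_2\|\mathbf{t}_{:d}\|_2=\sqrt{JL}\,\|\mathbf{u}_{:d}\|_2,$$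 where $\mathbf{u}_{:d},\mathbf{v}_{:d}$ are the $d$-th columns of $\mathbf{U},\mathbf{V}$, $\mathbf{r}_{:d}\in\mathbb{R}^J$ is the $d$-th column of $\widetilde{\mathbf{R}}\in\mathbb{R}^{J\times D}$ with $\widetilde{\mathbf{R}}(j,d)=\mathbf{R}_j(d,d)$, and $\mathbf{t}_{:d}\in\mathbb{R}^L$ is the $d$-th column of $\widetilde{\mathbf{T}}\in\mathbb{R}^{L\times D}$ with $\widetilde{\mathbf{T}}(l,d)=\mathbf{T}_l(d,d)$.
   Context: $\|\cdot\|_F$ is the Frobenius norm and $\|\cdot\|_2$ the Euclidean norm. The tensor nuclear 2-norm of a real tensor $\mathcal{A}\in\mathbb{R}^{n_1}\otimes\mathbb{R}^{n_2}\otimes\mathbb{R}^{n_3}\otimes\mathbb{R}^{n_4}$ is $\|\mathcal{A}\|_*=\min\big\{\sum_{i=1}^r\prod_{k=1}^4\|\mathbf{a}_{k,i}\|_2:\ \mathcal{A}=\sum_{i=1}^r\mathbf{a}_{1,i}\otimes\mathbf{a}_{2,i}\otimes\mathbf{a}_{3,i}\otimes\mathbf{a}_{4,i},\ r\in\mathbb{N},\ \mathbf{a}_{k,i}\in\mathbb{R}^{n_k}\big\}$, where $\otimes$ is the outer product. The factorization condition is equivalent to $\hat{\mathcal{X}}=\sum_{d=1}^D\mathbf{u}_{:d}\otimes\mathbf{r}_{:d}\otimes\mathbf{v}_{:d}\otimes\mathbf{t}_{:d}$. *)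

theory Defs
  imports Complex_Main
begin

text \<open>Vectors in R^n are functions nat => real, read on indices < n.
  Matrices in R^(m x n) are functions nat => nat => real, read on indices < m, < n.\<close>

definition vnorm2 :: "nat \<Rightarrow> (nat \<Rightarrow> real) \<Rightarrow> real" where
  "vnorm2 n a = sqrt (\<Sum>k<n. (a k)\<^sup>2)"

definition frob_sq :: "nat \<Rightarrow> nat \<Rightarrow> (nat \<Rightarrow> nat \<Rightarrow> real) \<Rightarrow> real" where
  "frob_sq m n A = (\<Sum>i<m. \<Sum>k<n. (A i k)\<^sup>2)"

definition matmul :: "nat \<Rightarrow> (nat \<Rightarrow> nat \<Rightarrow> real) \<Rightarrow> (nat \<Rightarrow> nat \<Rightarrow> real) \<Rightarrow> (nat \<Rightarrow> nat \<Rightarrow> real)" where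
  "matmul n A B = (\<lambda>i k. \<Sum>s<n. A i s * B s k)"

definition transp :: "(nat \<Rightarrow> nat \<Rightarrow> real) \<Rightarrow> (nat \<Rightarrow> nat \<Rightarrow> real)" where
  "transp A = (\<lambda>i k. A k i)"

definition diagm :: "(nat \<Rightarrow> real) \<Rightarrow> (nat \<Rightarrow> nat \<Rightarrow> real)" where
  "diagm r = (\<lambda>a b. if a = b then r a else 0)"

definition slice :: "(nat \<Rightarrow> nat \<Rightarrow> nat \<Rightarrow> nat \<Rightarrow> real) \<Rightarrow> nat \<Rightarrow> nat \<Rightarrow> (nat \<Rightarrow> nat \<Rightarrow> real)" where
  "slice X j l = (\<lambda>i k. X i j k l)"

definition is_rank1_decomp ::
  "nat \<Rightarrow> nat \<Rightarrow> nat \<Rightarrow> nat \<Rightarrow> (nat \<Rightarrow> nat \<Rightarrow> nat \<Rightarrow> nat \<Rightarrow> real) \<Rightarrow> nat \<Rightarrow>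
   (nat \<Rightarrow> nat \<Rightarrow> real) \<Rightarrow> (nat \<Rightarrow> nat \<Rightarrow> real) \<Rightarrow> (nat \<Rightarrow> nat \<Rightarrow> real) \<Rightarrow> (nat \<Rightarrow> nat \<Rightarrow> real) \<Rightarrow> bool" where
  "is_rank1_decomp n1 n2 n3 n4 X r a1 a2 a3 a4 \<longleftrightarrow>
     (\<forall>i1<n1. \<forall>i2<n2. \<forall>i3<n3. \<forall>i4<n4.
        X i1 i2 i3 i4 = (\<Sum>m<r. a1 m i1 * a2 m i2 * a3 m i3 * a4 m i4))"

text \<open>Tensor nuclear 2-norm (the minimum in the paper's definition; stated here as infimum).\<close>
definition nuclear_norm ::
  "nat \<Rightarrow> nat \<Rightarrow> nat \<Rightarrow> nat \<Rightarrow> (nat \<Rightarrow> nat \<Rightarrow> nat \<Rightarrow> nat \<Rightarrow> real) \<Rightarrow> real" where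
  "nuclear_norm n1 n2 n3 n4 X = Inf
     {(\<Sum>m<r. vnorm2 n1 (a1 m) * vnorm2 n2 (a2 m) * vnorm2 n3 (a3 m) * vnorm2 n4 (a4 m)) |
        r a1 a2 a3 a4. is_rank1_decomp n1 n2 n3 n4 X r a1 a2 a3 a4}"

text \<open>Factorization X_{jl} = U (R_j T_l) V^T for all j<J, l<L, where R_j = diagm (R j),
  T_l = diagm (T l); so R j d = R_j(d,d) and T l d = T_l(d,d).\<close>
definition is_factorization ::
  "nat \<Rightarrow> nat \<Rightarrow> nat \<Rightarrow> nat \<Rightarrow> (nat \<Rightarrow> nat \<Rightarrow> nat \<Rightarrow> nat \<Rightarrow> real) \<Rightarrow> nat \<Rightarrow>
   (nat \<Rightarrow> nat \<Rightarrow> real) \<Rightarrow> (nat \<Rightarrow> nat \<Rightarrow> real) \<Rightarrow> (nat \<Rightarrow> nat \<Rightarrow> real) \<Rightarrow> (nat \<Rightarrow> nat \<Rightarrow> real) \<Rightarrow> bool" where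
  "is_factorization N1 J N3 L X D U V R T \<longleftrightarrow>
     (\<forall>j<J. \<forall>l<L. \<forall>i<N1. \<forall>k<N3.
        slice X j l i k =
          matmul D (matmul D U (matmul D (diagm (R j)) (diagm (T l)))) (transp V) i k)"

definition fact_objective ::
  "nat \<Rightarrow> nat \<Rightarrow> nat \<Rightarrow> nat \<Rightarrow> nat \<Rightarrow>
   (nat \<Rightarrow> nat \<Rightarrow> real) \<Rightarrow> (nat \<Rightarrow> nat \<Rightarrow> real) \<Rightarrow> (nat \<Rightarrow> nat \<Rightarrow> real) \<Rightarrow> (nat \<Rightarrow> nat \<Rightarrow> real) \<Rightarrow> real" where
  "fact_objective N1 J N3 L D U V R T =
     1 / (4 * sqrt (real J * real L)) *
     (\<Sum>l<L. \<Sum>j<J.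
        frob_sq N1 D (matmul D U (matmul D (diagm (R j)) (diagm (T l))))
      + frob_sq N3 D V
      + frob_sq N3 D (matmul D V (transp (matmul D (diagm (R j)) (diagm (T l)))))
      + frob_sq N1 D U)"

end

theory Submission
  imports Defs "HOL-Analysis.Analysis"
begin

text \<open>Write \<open>s = \<surd>(JL)\<close>. A factorization is the rank-one decomposition
  \<open>X = \<Sum>\<^sub>d u\<^sub>d \<otimes> r\<^sub>d \<otimes> v\<^sub>d \<otimes> t\<^sub>d\<close> read off its columns, and its objective splits over the columns:
  with \<open>\<rho> = \<parallel>r\<^sub>d\<parallel> \<parallel>t\<^sub>d\<parallel>\<close>, column \<open>d\<close> contributes
  \<open>(\<parallel>u\<parallel>\<^sup>2\<rho>\<^sup>2 + s\<^sup>2\<parallel>v\<parallel>\<^sup>2 + \<parallel>v\<parallel>\<^sup>2\<rho>\<^sup>2 + s\<^sup>2\<parallel>u\<parallel>\<^sup>2) / 4s\<close>, which by AM-GM is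
  \<open>\<parallel>u\<parallel> \<parallel>v\<parallel> \<rho>\<close> plus a nonnegative defect vanishing exactly when \<open>\<parallel>u\<parallel>\<rho> = s\<parallel>v\<parallel>\<close> and
  \<open>\<parallel>v\<parallel>\<rho> = s\<parallel>u\<parallel>\<close>. So the objective dominates the cost of a rank-one decomposition, hence the
  nuclear norm, and conversely every decomposition can be rescaled termwise into a factorization
  with zero defect and the same cost. Equality then needs the infimum defining the nuclear norm
  to be attained: a conic Caratheodory argument shortens every decomposition to
  \<open>N\<^sub>1 J N\<^sub>3 L + 1\<close> terms at the same cost, and after balancing the factors the decompositions
  of bounded cost form a compact set.\<close>

lemma vnorm2_nonneg: "vnorm2 n x \<ge> 0"
  by (simp add: vnorm2_def sum_nonneg)

lemma vnorm2_power2: "(vnorm2 n x)\<^sup>2 = (\<Sum>k<n. (x k)\<^sup>2)"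
  by (simp add: vnorm2_def sum_nonneg)

lemma vnorm2_eq_0_imp: "vnorm2 n x = 0 \<Longrightarrow> k < n \<Longrightarrow> x k = 0"
  by (simp add: vnorm2_def sum_nonneg_eq_0_iff)

lemma vnorm2_zero [simp]: "vnorm2 n (\<lambda>_. 0) = 0"
  by (simp add: vnorm2_def)

lemma vnorm2_cong: "(\<And>k. k < n \<Longrightarrow> x k = y k) \<Longrightarrow> vnorm2 n x = vnorm2 n y"
  by (simp add: vnorm2_def)

lemma vnorm2_scaleR: "vnorm2 n (\<lambda>i. c * x i) = \<bar>c\<bar> * vnorm2 n x"
  by (simp add: vnorm2_def power_mult_distrib real_sqrt_mult flip: sum_distrib_left)

lemma abs_le_vnorm2: "k < n \<Longrightarrow> \<bar>x k\<bar> \<le> vnorm2 n x"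
proof -
  assume "k < n"
  then have "(x k)\<^sup>2 \<le> (\<Sum>k<n. (x k)\<^sup>2)"
    by (intro member_le_sum) auto
  then show ?thesis
    by (metis real_sqrt_abs real_sqrt_le_iff vnorm2_def)
qed

definition rescale_to_norm :: "nat \<Rightarrow> real \<Rightarrow> (nat \<Rightarrow> real) \<Rightarrow> nat \<Rightarrow> real" where
  "rescale_to_norm n c x = (\<lambda>i. if i < n then c / vnorm2 n x * x i else 0)"

lemma
  assumes "vnorm2 n x > 0" "c \<ge> 0"
  shows vnorm2_rescale_to_norm: "vnorm2 n (rescale_to_norm n c x) = c"
    and abs_rescale_to_norm_le: "\<bar>rescale_to_norm n c x i\<bar> \<le> c"
proof -
  have "vnorm2 n (rescale_to_norm n c x) = \<bar>c / vnorm2 n x\<bar> * vnorm2 n x"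
    unfolding rescale_to_norm_def
    by (subst vnorm2_cong[where y = "\<lambda>i. c / vnorm2 n x * x i"]) (simp_all only: vnorm2_scaleR, simp)
  also have "\<dots> = c"
    using assms by simp
  finally show norm: "vnorm2 n (rescale_to_norm n c x) = c" .
  show "\<bar>rescale_to_norm n c x i\<bar> \<le> c"
  proof (cases "i < n")
    case True
    then show ?thesis
      using abs_le_vnorm2[of i n "rescale_to_norm n c x"] norm by simp
  qed (use assms in \<open>simp add: rescale_to_norm_def\<close>)
qed

section \<open>Rank-one decompositions and their cost\<close>

definition decomp_cost ::
  "nat \<Rightarrow> nat \<Rightarrow> nat \<Rightarrow> nat \<Rightarrow> nat \<Rightarrow>
   (nat \<Rightarrow> nat \<Rightarrow> real) \<Rightarrow> (nat \<Rightarrow> nat \<Rightarrow> real) \<Rightarrow> (nat \<Rightarrow> nat \<Rightarrow> real) \<Rightarrow> (nat \<Rightarrow> nat \<Rightarrow> real) \<Rightarrow> real"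
  where "decomp_cost n1 n2 n3 n4 r a1 a2 a3 a4 =
    (\<Sum>m<r. vnorm2 n1 (a1 m) * vnorm2 n2 (a2 m) * vnorm2 n3 (a3 m) * vnorm2 n4 (a4 m))"

lemma decomp_cost_nonneg: "decomp_cost n1 n2 n3 n4 r a1 a2 a3 a4 \<ge> 0"
  unfolding decomp_cost_def by (intro sum_nonneg mult_nonneg_nonneg vnorm2_nonneg)

lemma nuclear_norm_eq_Inf_decomp_cost:
  "nuclear_norm n1 n2 n3 n4 X = Inf {decomp_cost n1 n2 n3 n4 r a1 a2 a3 a4 | r a1 a2 a3 a4.
     is_rank1_decomp n1 n2 n3 n4 X r a1 a2 a3 a4}"
  unfolding nuclear_norm_def decomp_cost_def ..

lemma nuclear_norm_le_decomp_cost: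
  assumes "is_rank1_decomp n1 n2 n3 n4 X r a1 a2 a3 a4"
  shows "nuclear_norm n1 n2 n3 n4 X \<le> decomp_cost n1 n2 n3 n4 r a1 a2 a3 a4"
  unfolding nuclear_norm_eq_Inf_decomp_cost
proof (rule cInf_lower)
  show "decomp_cost n1 n2 n3 n4 r a1 a2 a3 a4 \<in> {decomp_cost n1 n2 n3 n4 r a1 a2 a3 a4 | r a1 a2 a3 a4.
     is_rank1_decomp n1 n2 n3 n4 X r a1 a2 a3 a4}"
    using assms by blast
qed (auto intro: bdd_belowI[of _ 0] decomp_cost_nonneg)

lemma rank1_term_rescale:
  fixes x1 x2 x3 x4 :: "nat \<Rightarrow> real"
  assumes c: "c1 * c2 * c3 * c4 = vnorm2 n1 x1 * vnorm2 n2 x2 * vnorm2 n3 x3 * vnorm2 n4 x4"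
    and nonneg: "c1 \<ge> 0" "c2 \<ge> 0" "c3 \<ge> 0" "c4 \<ge> 0"
  shows "\<exists>y1 y2 y3 y4.
    (\<forall>i1<n1. \<forall>i2<n2. \<forall>i3<n3. \<forall>i4<n4.
       y1 i1 * y2 i2 * y3 i3 * y4 i4 = x1 i1 * x2 i2 * x3 i3 * x4 i4) \<and>
    (\<forall>i. \<bar>y1 i\<bar> \<le> c1 \<and> \<bar>y2 i\<bar> \<le> c2 \<and> \<bar>y3 i\<bar> \<le> c3 \<and> \<bar>y4 i\<bar> \<le> c4) \<and>
    (vnorm2 n1 y1, vnorm2 n2 y2, vnorm2 n3 y3, vnorm2 n4 y4) =
      (if c1 * c2 * c3 * c4 = 0 then (0, 0, 0, 0) else (c1, c2, c3, c4))"
proof (cases "c1 * c2 * c3 * c4 = 0")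
  case True
  then have "vnorm2 n1 x1 = 0 \<or> vnorm2 n2 x2 = 0 \<or> vnorm2 n3 x3 = 0 \<or> vnorm2 n4 x4 = 0"
    using c by simp
  then have "x1 i1 * x2 i2 * x3 i3 * x4 i4 = 0"
    if "i1 < n1" "i2 < n2" "i3 < n3" "i4 < n4" for i1 i2 i3 i4
    using that vnorm2_eq_0_imp by fastforce
  then show ?thesis
    using True nonneg by (intro exI[of _ "\<lambda>_. 0"]) auto
next
  case False
  have pos: "vnorm2 n1 x1 > 0" "vnorm2 n2 x2 > 0" "vnorm2 n3 x3 > 0" "vnorm2 n4 x4 > 0"
    using False c vnorm2_nonneg[of n1 x1] vnorm2_nonneg[of n2 x2] vnorm2_nonneg[of n3 x3]
      vnorm2_nonneg[of n4 x4] by (auto simp: less_le)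
  have "rescale_to_norm n1 c1 x1 i1 * rescale_to_norm n2 c2 x2 i2 * rescale_to_norm n3 c3 x3 i3 *
        rescale_to_norm n4 c4 x4 i4
      = c1 * c2 * c3 * c4 / (vnorm2 n1 x1 * vnorm2 n2 x2 * vnorm2 n3 x3 * vnorm2 n4 x4)
        * (x1 i1 * x2 i2 * x3 i3 * x4 i4)"
    if "i1 < n1" "i2 < n2" "i3 < n3" "i4 < n4" for i1 i2 i3 i4
    using that by (simp add: rescale_to_norm_def)
  then have prod: "rescale_to_norm n1 c1 x1 i1 * rescale_to_norm n2 c2 x2 i2 *
        rescale_to_norm n3 c3 x3 i3 * rescale_to_norm n4 c4 x4 i4
      = x1 i1 * x2 i2 * x3 i3 * x4 i4"
    if "i1 < n1" "i2 < n2" "i3 < n3" "i4 < n4" for i1 i2 i3 i4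
    using that False c by simp
  show ?thesis
    by (rule exI[of _ "rescale_to_norm n1 c1 x1"], rule exI[of _ "rescale_to_norm n2 c2 x2"],
        rule exI[of _ "rescale_to_norm n3 c3 x3"], rule exI[of _ "rescale_to_norm n4 c4 x4"])
      (use prod False pos nonneg in \<open>simp add: vnorm2_rescale_to_norm abs_rescale_to_norm_le\<close>)
qed

lemma rank1_decomp_rescale:
  assumes dec: "is_rank1_decomp n1 n2 n3 n4 X r a1 a2 a3 a4"
    and c: "\<And>m. m < r \<Longrightarrow> c1 m * c2 m * c3 m * c4 m =
      vnorm2 n1 (a1 m) * vnorm2 n2 (a2 m) * vnorm2 n3 (a3 m) * vnorm2 n4 (a4 m)"
    and nonneg: "\<And>m. c1 m \<ge> 0" "\<And>m. c2 m \<ge> 0" "\<And>m. c3 m \<ge> 0" "\<And>m. c4 m \<ge> 0"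
  shows "\<exists>b1 b2 b3 b4. is_rank1_decomp n1 n2 n3 n4 X r b1 b2 b3 b4 \<and>
    decomp_cost n1 n2 n3 n4 r b1 b2 b3 b4 = decomp_cost n1 n2 n3 n4 r a1 a2 a3 a4 \<and>
    (\<forall>m i. \<bar>b1 m i\<bar> \<le> c1 m \<and> \<bar>b2 m i\<bar> \<le> c2 m \<and> \<bar>b3 m i\<bar> \<le> c3 m \<and> \<bar>b4 m i\<bar> \<le> c4 m) \<and>
    (\<forall>m<r. (vnorm2 n1 (b1 m), vnorm2 n2 (b2 m), vnorm2 n3 (b3 m), vnorm2 n4 (b4 m)) =
      (if c1 m * c2 m * c3 m * c4 m = 0 then (0, 0, 0, 0) else (c1 m, c2 m, c3 m, c4 m)))"
proof -
  have "\<exists>y1 y2 y3 y4. (m < r \<longrightarrow>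
      (\<forall>i1<n1. \<forall>i2<n2. \<forall>i3<n3. \<forall>i4<n4.
         y1 i1 * y2 i2 * y3 i3 * y4 i4 = a1 m i1 * a2 m i2 * a3 m i3 * a4 m i4) \<and>
      (vnorm2 n1 y1, vnorm2 n2 y2, vnorm2 n3 y3, vnorm2 n4 y4) =
        (if c1 m * c2 m * c3 m * c4 m = 0 then (0, 0, 0, 0) else (c1 m, c2 m, c3 m, c4 m))) \<and>
      (\<forall>i. \<bar>y1 i\<bar> \<le> c1 m \<and> \<bar>y2 i\<bar> \<le> c2 m \<and> \<bar>y3 i\<bar> \<le> c3 m \<and> \<bar>y4 i\<bar> \<le> c4 m)" for m
  proof (cases "m < r")
    case True
    then show ?thesis
      using rank1_term_rescale[OF c[OF True] nonneg] by blast
  next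
    case False
    then show ?thesis
      using nonneg by (intro exI[of _ "\<lambda>_. 0"]) simp
  qed
  then obtain b1 b2 b3 b4 where
    entry: "\<And>m i1 i2 i3 i4. m < r \<Longrightarrow> i1 < n1 \<Longrightarrow> i2 < n2 \<Longrightarrow> i3 < n3 \<Longrightarrow> i4 < n4 \<Longrightarrow>
       b1 m i1 * b2 m i2 * b3 m i3 * b4 m i4 = a1 m i1 * a2 m i2 * a3 m i3 * a4 m i4" and
    norm: "\<forall>m<r. (vnorm2 n1 (b1 m), vnorm2 n2 (b2 m), vnorm2 n3 (b3 m), vnorm2 n4 (b4 m)) =
      (if c1 m * c2 m * c3 m * c4 m = 0 then (0, 0, 0, 0) else (c1 m, c2 m, c3 m, c4 m))" and
    bound: "\<forall>m i. \<bar>b1 m i\<bar> \<le> c1 m \<and> \<bar>b2 m i\<bar> \<le> c2 m \<and> \<bar>b3 m i\<bar> \<le> c3 m \<and> \<bar>b4 m i\<bar> \<le> c4 m"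
    by metis
  have "is_rank1_decomp n1 n2 n3 n4 X r b1 b2 b3 b4"
    using dec entry unfolding is_rank1_decomp_def by simp
  moreover have "decomp_cost n1 n2 n3 n4 r b1 b2 b3 b4 = decomp_cost n1 n2 n3 n4 r a1 a2 a3 a4"
    unfolding decomp_cost_def
  proof (intro sum.cong refl)
    fix m
    assume "m \<in> {..<r}"
    then show "vnorm2 n1 (b1 m) * vnorm2 n2 (b2 m) * vnorm2 n3 (b3 m) * vnorm2 n4 (b4 m) =
        vnorm2 n1 (a1 m) * vnorm2 n2 (a2 m) * vnorm2 n3 (a3 m) * vnorm2 n4 (a4 m)"
      using norm c[of m] by (auto split: if_splits)
  qed
  ultimately show ?thesis
    using bound norm by blast
qed

lemma rank1_decomp_of_sum:
  assumes "finite A"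
    and X: "\<And>i1 i2 i3 i4. i1 < n1 \<Longrightarrow> i2 < n2 \<Longrightarrow> i3 < n3 \<Longrightarrow> i4 < n4 \<Longrightarrow>
      X i1 i2 i3 i4 = (\<Sum>m\<in>A. a1 m i1 * a2 m i2 * a3 m i3 * a4 m i4)"
  shows "\<exists>b1 b2 b3 b4. is_rank1_decomp n1 n2 n3 n4 X (card A) b1 b2 b3 b4 \<and>
    decomp_cost n1 n2 n3 n4 (card A) b1 b2 b3 b4 =
      (\<Sum>m\<in>A. vnorm2 n1 (a1 m) * vnorm2 n2 (a2 m) * vnorm2 n3 (a3 m) * vnorm2 n4 (a4 m))"
proof -
  obtain h where h: "bij_betw h {..<card A} A"
    using ex_bij_betw_nat_finite[OF \<open>finite A\<close>] by (auto simp: lessThan_atLeast0)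
  have "is_rank1_decomp n1 n2 n3 n4 X (card A) (a1 \<circ> h) (a2 \<circ> h) (a3 \<circ> h) (a4 \<circ> h)"
    unfolding is_rank1_decomp_def
    using X sum.reindex_bij_betw[OF h, of "\<lambda>m. a1 m _ * a2 m _ * a3 m _ * a4 m _"] by simp
  moreover have "decomp_cost n1 n2 n3 n4 (card A) (a1 \<circ> h) (a2 \<circ> h) (a3 \<circ> h) (a4 \<circ> h) =
      (\<Sum>m\<in>A. vnorm2 n1 (a1 m) * vnorm2 n2 (a2 m) * vnorm2 n3 (a3 m) * vnorm2 n4 (a4 m))"
    unfolding decomp_cost_def
    using sum.reindex_bij_betw[OF h, of "\<lambda>m. vnorm2 n1 (a1 m) * vnorm2 n2 (a2 m) * vnorm2 n3 (a3 m) * vnorm2 n4 (a4 m)"]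
    by simp
  ultimately show ?thesis
    by blast
qed

lemma sum_lessThan_if_less:
  fixes f :: "nat \<Rightarrow> 'a::comm_monoid_add"
  assumes "r \<le> M"
  shows "(\<Sum>m<M. if m < r then f m else 0) = (\<Sum>m<r. f m)"
proof -
  have "{..<M} \<inter> {m. m < r} = {..<r}"
    using assms by auto
  then show ?thesis
    by (simp add: sum.If_cases)
qed

lemma rank1_decomp_pad:
  assumes "is_rank1_decomp n1 n2 n3 n4 X r a1 a2 a3 a4" "r \<le> M"
  shows "is_rank1_decomp n1 n2 n3 n4 X M (\<lambda>m. if m < r then a1 m else (\<lambda>_. 0)) a2 a3 a4"
    and "decomp_cost n1 n2 n3 n4 M (\<lambda>m. if m < r then a1 m else (\<lambda>_. 0)) a2 a3 a4 =
      decomp_cost n1 n2 n3 n4 r a1 a2 a3 a4"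
proof -
  have "(\<Sum>m<M. (if m < r then a1 m else (\<lambda>_. 0)) i1 * a2 m i2 * a3 m i3 * a4 m i4) =
      (\<Sum>m<M. if m < r then a1 m i1 * a2 m i2 * a3 m i3 * a4 m i4 else 0)" for i1 i2 i3 i4
    by (intro sum.cong) auto
  then show "is_rank1_decomp n1 n2 n3 n4 X M (\<lambda>m. if m < r then a1 m else (\<lambda>_. 0)) a2 a3 a4"
    using assms by (simp add: is_rank1_decomp_def sum_lessThan_if_less)
  have "decomp_cost n1 n2 n3 n4 M (\<lambda>m. if m < r then a1 m else (\<lambda>_. 0)) a2 a3 a4 =
      (\<Sum>m<M. if m < r then vnorm2 n1 (a1 m) * vnorm2 n2 (a2 m) * vnorm2 n3 (a3 m) * vnorm2 n4 (a4 m) else 0)"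
    unfolding decomp_cost_def by (intro sum.cong) auto
  then show "decomp_cost n1 n2 n3 n4 M (\<lambda>m. if m < r then a1 m else (\<lambda>_. 0)) a2 a3 a4 =
      decomp_cost n1 n2 n3 n4 r a1 a2 a3 a4"
    using assms by (simp add: decomp_cost_def sum_lessThan_if_less)
qed

lemma exists_rank1_decomp: "\<exists>r a1 a2 a3 a4. is_rank1_decomp n1 n2 n3 n4 X r a1 a2 a3 a4"
proof -
  define A where "A = {..<n1} \<times> {..<n2} \<times> {..<n3}"
  have "X i1 i2 i3 i4 = (\<Sum>t\<in>A. if t = (i1, i2, i3) then X i1 i2 i3 i4 else 0)"
    if "i1 < n1" "i2 < n2" "i3 < n3" for i1 i2 i3 i4
    using that by (simp add: A_def)
  also have "\<dots> i1 i2 i3 i4 = (\<Sum>(i, j, k)\<in>A.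
      (if i1 = i then 1 else 0) * (if i2 = j then 1 else 0) * (if i3 = k then 1 else 0) * X i j k i4)"
    for i1 i2 i3 i4
    by (intro sum.cong) (auto split: if_splits)
  finally show ?thesis
    using rank1_decomp_of_sum[of A n1 n2 n3 n4 X "\<lambda>(i, j, k) i'. if i' = i then 1 else 0"
        "\<lambda>(i, j, k) j'. if j' = j then 1 else 0" "\<lambda>(i, j, k) k'. if k' = k then 1 else 0"
        "\<lambda>(i, j, k) l. X i j k l"]
    by (force simp: A_def case_prod_unfold)
qed

section \<open>Shortening decompositions\<close>

lemma nontrivial_linear_relation:
  fixes w :: "'i \<Rightarrow> 's \<Rightarrow> real"
  assumes "finite S" "finite I" "card S < card I"
  shows "\<exists>\<mu>. (\<exists>m\<in>I. \<mu> m \<noteq> 0) \<and> (\<forall>x\<in>S. (\<Sum>m\<in>I. \<mu> m * w m x) = 0)"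
  using assms
proof (induction S arbitrary: I w rule: finite_induct)
  case empty
  then show ?case
    by (intro exI[of _ "\<lambda>_. 1"]) (auto simp: card_gt_0_iff)
next
  case (insert s S I w)
  show ?case
  proof (cases "\<forall>m\<in>I. w m s = 0")
    case True
    obtain \<mu> where "\<exists>m\<in>I. \<mu> m \<noteq> 0" "\<forall>x\<in>S. (\<Sum>m\<in>I. \<mu> m * w m x) = 0"
      using insert.IH[of I w] insert.prems insert.hyps by auto
    then show ?thesis
      using True by (intro exI[of _ \<mu>]) auto
  next
    case False
    then obtain m0 where m0: "m0 \<in> I" "w m0 s \<noteq> 0"
      by auto
    define I0 where "I0 = I - {m0}"
    define w0 where "w0 m x = w m x - w m s / w m0 s * w m0 x" for m x
    have "card S < card I0"
      using insert m0 by (simp add: I0_def)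
    then obtain \<mu>0 where \<mu>0: "\<exists>m\<in>I0. \<mu>0 m \<noteq> 0" "\<forall>x\<in>S. (\<Sum>m\<in>I0. \<mu>0 m * w0 m x) = 0"
      using insert.IH[of I0 w0] insert.prems by (auto simp: I0_def)
    \<comment> \<open>Eliminating the coordinate \<open>s\<close> with the pivot \<open>m0\<close> reduces to the vectors \<open>w0\<close>, which vanish at \<open>s\<close>.\<close>
    define \<mu> where "\<mu> m = (if m = m0 then - (\<Sum>m\<in>I0. \<mu>0 m * w m s) / w m0 s else \<mu>0 m)" for m
    have combination: "(\<Sum>m\<in>I. \<mu> m * w m x) = (\<Sum>m\<in>I0. \<mu>0 m * w0 m x)" for x
    proof -
      have "(\<Sum>m\<in>I. \<mu> m * w m x) = \<mu> m0 * w m0 x + (\<Sum>m\<in>I0. \<mu>0 m * w m x)"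
        using m0 insert.prems by (simp add: I0_def \<mu>_def sum.remove)
      also have "\<dots> = (\<Sum>m\<in>I0. \<mu>0 m * w0 m x)"
        by (simp add: w0_def \<mu>_def m0 right_diff_distrib sum_subtractf sum_distrib_left
            sum_divide_distrib mult_ac)
      finally show ?thesis .
    qed
    have "w0 m s = 0" for m
      using m0 by (simp add: w0_def)
    then have "\<forall>x\<in>insert s S. (\<Sum>m\<in>I. \<mu> m * w m x) = 0"
      using \<mu>0(2) by (simp add: combination)
    moreover have "\<exists>m\<in>I. \<mu> m \<noteq> 0"
      using \<mu>0(1) by (auto simp: \<mu>_def I0_def)
    ultimately show ?thesis
      by blast
  qed
qed

lemma conic_caratheodory_step:
  fixes w :: "'i \<Rightarrow> 's \<Rightarrow> real" and \<alpha> :: "'i \<Rightarrow> real"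
  assumes S: "finite S" and I: "finite I" and nonneg: "\<forall>m\<in>I. \<alpha> m \<ge> 0" and card: "card S < card I"
  shows "\<exists>m0\<in>I. \<exists>\<alpha>'. (\<forall>m\<in>I - {m0}. \<alpha>' m \<ge> 0) \<and>
    (\<forall>x\<in>S. (\<Sum>m\<in>I - {m0}. \<alpha>' m * w m x) = (\<Sum>m\<in>I. \<alpha> m * w m x))"
proof -
  obtain \<mu>0 where \<mu>0: "\<exists>m\<in>I. \<mu>0 m \<noteq> 0" "\<forall>x\<in>S. (\<Sum>m\<in>I. \<mu>0 m * w m x) = 0"
    using nontrivial_linear_relation[OF S I card] by blast
  obtain \<mu> where neg: "\<exists>m\<in>I. \<mu> m < 0" and rel: "\<forall>x\<in>S. (\<Sum>m\<in>I. \<mu> m * w m x) = 0"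
  proof (cases "\<exists>m\<in>I. \<mu>0 m < 0")
    case True
    then show ?thesis
      using \<mu>0(2) that by blast
  next
    case False
    then show ?thesis
      using \<mu>0 that[of "\<lambda>m. - \<mu>0 m"] by (force simp: sum_negf)
  qed
  define N where "N = {m\<in>I. \<mu> m < 0}"
  obtain m0 where m0: "m0 \<in> N" and least: "\<And>m. m \<in> N \<Longrightarrow> \<alpha> m0 / - \<mu> m0 \<le> \<alpha> m / - \<mu> m"
    using ex_is_arg_min_if_finite[of N "\<lambda>m. \<alpha> m / - \<mu> m"] I neg
    by (auto simp: N_def is_arg_min_linorder)
  \<comment> \<open>Move along the relation \<open>\<mu>\<close> until the first weight hits zero.\<close>
  define t where "t = \<alpha> m0 / - \<mu> m0"
  define \<alpha>' where "\<alpha>' m = \<alpha> m + t * \<mu> m" for m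
  have m0I: "m0 \<in> I" and "\<mu> m0 < 0"
    using m0 by (auto simp: N_def)
  then have "t \<ge> 0"
    using nonneg by (simp add: t_def divide_nonneg_neg)
  have "\<alpha>' m0 = 0"
    using \<open>\<mu> m0 < 0\<close> by (simp add: \<alpha>'_def t_def)
  have "\<alpha>' m \<ge> 0" if "m \<in> I" for m
  proof (cases "\<mu> m < 0")
    case True
    then have "t * - \<mu> m \<le> \<alpha> m"
      using least[of m] that by (simp add: N_def t_def field_simps)
    then show ?thesis
      by (simp add: \<alpha>'_def)
  next
    case False
    then show ?thesis
      using \<open>t \<ge> 0\<close> nonneg that by (simp add: \<alpha>'_def)
  qed
  moreover have "(\<Sum>m\<in>I - {m0}. \<alpha>' m * w m x) = (\<Sum>m\<in>I. \<alpha> m * w m x)" if "x \<in> S" for x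
  proof -
    have "(\<Sum>m\<in>I. \<alpha>' m * w m x) = (\<Sum>m\<in>I. \<alpha> m * w m x) + t * (\<Sum>m\<in>I. \<mu> m * w m x)"
      by (simp add: \<alpha>'_def algebra_simps sum.distrib sum_distrib_left)
    then show ?thesis
      using rel that I m0I \<open>\<alpha>' m0 = 0\<close> by (simp add: sum.remove)
  qed
  ultimately show ?thesis
    using m0I by blast
qed

lemma conic_caratheodory:
  fixes w :: "'i \<Rightarrow> 's \<Rightarrow> real" and \<alpha> :: "'i \<Rightarrow> real"
  assumes "finite S" "finite I" "\<forall>m\<in>I. \<alpha> m \<ge> 0"
  shows "\<exists>I'\<subseteq>I. \<exists>\<alpha>'. card I' \<le> card S \<and> (\<forall>m\<in>I'. \<alpha>' m \<ge> 0) \<and>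
    (\<forall>x\<in>S. (\<Sum>m\<in>I'. \<alpha>' m * w m x) = (\<Sum>m\<in>I. \<alpha> m * w m x))"
  using assms(2,3)
proof (induction "card I" arbitrary: I \<alpha> rule: less_induct)
  case less
  show ?case
  proof (cases "card I \<le> card S")
    case True
    then show ?thesis
      using less.prems by blast
  next
    case False
    then have "card S < card I"
      by simp
    then obtain m0 \<alpha>' where m0: "m0 \<in> I" and nonneg': "\<forall>m\<in>I - {m0}. \<alpha>' m \<ge> 0"
      and eq: "\<forall>x\<in>S. (\<Sum>m\<in>I - {m0}. \<alpha>' m * w m x) = (\<Sum>m\<in>I. \<alpha> m * w m x)"
      using conic_caratheodory_step[OF \<open>finite S\<close> less.prems(1,2)] by blast
    have "card (I - {m0}) < card I"
      using less.prems(1) m0 by (rule card_Diff1_less)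
    then obtain I' \<alpha>'' where "I' \<subseteq> I - {m0}" "card I' \<le> card S" "\<forall>m\<in>I'. \<alpha>'' m \<ge> 0"
      "\<forall>x\<in>S. (\<Sum>m\<in>I'. \<alpha>'' m * w m x) = (\<Sum>m\<in>I - {m0}. \<alpha>' m * w m x)"
      using less.hyps[OF _ _ nonneg'] less.prems(1) by blast
    then have "I' \<subseteq> I \<and> card I' \<le> card S \<and> (\<forall>m\<in>I'. \<alpha>'' m \<ge> 0) \<and>
        (\<forall>x\<in>S. (\<Sum>m\<in>I'. \<alpha>'' m * w m x) = (\<Sum>m\<in>I. \<alpha> m * w m x))"
      using eq by auto
    then show ?thesis
      by blast
  qed
qed

lemma rank1_decomp_short:
  assumes dec: "is_rank1_decomp n1 n2 n3 n4 X r a1 a2 a3 a4"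
  defines "M \<equiv> n1 * n2 * n3 * n4 + 1"
  shows "\<exists>b1 b2 b3 b4. is_rank1_decomp n1 n2 n3 n4 X M b1 b2 b3 b4 \<and>
    decomp_cost n1 n2 n3 n4 M b1 b2 b3 b4 = decomp_cost n1 n2 n3 n4 r a1 a2 a3 a4"
proof -
  define S where "S = insert None (Some ` ({..<n1} \<times> {..<n2} \<times> {..<n3} \<times> {..<n4}))"
  \<comment> \<open>The extra coordinate \<open>None\<close> carries the cost, so that the Caratheodory reduction preserves it.\<close>
  define w where "w m x = (case x of
      None \<Rightarrow> vnorm2 n1 (a1 m) * vnorm2 n2 (a2 m) * vnorm2 n3 (a3 m) * vnorm2 n4 (a4 m)
    | Some (i1, i2, i3, i4) \<Rightarrow> a1 m i1 * a2 m i2 * a3 m i3 * a4 m i4)" for m x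
  have "card S = M"
    by (simp add: S_def M_def card_image card_cartesian_product)
  moreover have "finite S"
    by (simp add: S_def)
  ultimately obtain I \<alpha> where I: "I \<subseteq> {..<r}" "card I \<le> M" and nonneg: "\<forall>m\<in>I. \<alpha> m \<ge> 0"
    and same: "\<forall>x\<in>S. (\<Sum>m\<in>I. \<alpha> m * w m x) = (\<Sum>m<r. 1 * w m x)"
    using conic_caratheodory[of S "{..<r}" "\<lambda>_. 1" w] by auto
  have "finite I"
    using I(1) finite_subset by blast
  have "X i1 i2 i3 i4 = (\<Sum>m\<in>I. (\<alpha> m * a1 m i1) * a2 m i2 * a3 m i3 * a4 m i4)"
    if "i1 < n1" "i2 < n2" "i3 < n3" "i4 < n4" for i1 i2 i3 i4
    using dec that same[rule_format, of "Some (i1, i2, i3, i4)"]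
    by (simp add: is_rank1_decomp_def S_def w_def mult.assoc)
  then obtain b1 b2 b3 b4 where b: "is_rank1_decomp n1 n2 n3 n4 X (card I) b1 b2 b3 b4"
    "decomp_cost n1 n2 n3 n4 (card I) b1 b2 b3 b4 =
      (\<Sum>m\<in>I. vnorm2 n1 (\<lambda>i. \<alpha> m * a1 m i) * vnorm2 n2 (a2 m) * vnorm2 n3 (a3 m) * vnorm2 n4 (a4 m))"
    using rank1_decomp_of_sum[OF \<open>finite I\<close>, of n1 n2 n3 n4 X "\<lambda>m i. \<alpha> m * a1 m i"] by blast
  have "decomp_cost n1 n2 n3 n4 (card I) b1 b2 b3 b4 = decomp_cost n1 n2 n3 n4 r a1 a2 a3 a4"
    unfolding b(2)
    using nonneg same[rule_format, of None]
    by (simp add: decomp_cost_def S_def w_def vnorm2_scaleR mult.assoc)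
  then show ?thesis
    using rank1_decomp_pad[OF b(1) I(2)] by auto
qed

lemma rank1_decomp_short_bounded:
  assumes dec: "is_rank1_decomp n1 n2 n3 n4 X r a1 a2 a3 a4"
  defines "M \<equiv> n1 * n2 * n3 * n4 + 1"
    and "B \<equiv> sqrt (sqrt (decomp_cost n1 n2 n3 n4 r a1 a2 a3 a4))"
  shows "\<exists>b1 b2 b3 b4. is_rank1_decomp n1 n2 n3 n4 X M b1 b2 b3 b4 \<and>
    decomp_cost n1 n2 n3 n4 M b1 b2 b3 b4 = decomp_cost n1 n2 n3 n4 r a1 a2 a3 a4 \<and>
    (\<forall>m i. \<bar>b1 m i\<bar> \<le> B \<and> \<bar>b2 m i\<bar> \<le> B \<and> \<bar>b3 m i\<bar> \<le> B \<and> \<bar>b4 m i\<bar> \<le> B)"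
proof -
  obtain e1 e2 e3 e4 where e: "is_rank1_decomp n1 n2 n3 n4 X M e1 e2 e3 e4"
    "decomp_cost n1 n2 n3 n4 M e1 e2 e3 e4 = decomp_cost n1 n2 n3 n4 r a1 a2 a3 a4"
    using rank1_decomp_short[OF dec] unfolding M_def by blast
  define p where "p m = vnorm2 n1 (e1 m) * vnorm2 n2 (e2 m) * vnorm2 n3 (e3 m) * vnorm2 n4 (e4 m)" for m
  define q where "q m = (if m < M then sqrt (sqrt (p m)) else 0)" for m
  have p_nonneg: "p m \<ge> 0" for m
    by (simp add: p_def vnorm2_nonneg)
  have "q m * q m * q m * q m = p m" if "m < M" for m
  proof -
    have "q m * q m = sqrt (p m)"
      using that p_nonneg[of m] by (simp add: q_def)
    then show ?thesis
      using p_nonneg[of m] by (metis mult.assoc real_sqrt_mult_self abs_of_nonneg)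
  qed
  moreover have "q m \<ge> 0" for m
    by (simp add: q_def p_nonneg)
  ultimately obtain b1 b2 b3 b4 where b: "is_rank1_decomp n1 n2 n3 n4 X M b1 b2 b3 b4"
    "decomp_cost n1 n2 n3 n4 M b1 b2 b3 b4 = decomp_cost n1 n2 n3 n4 M e1 e2 e3 e4"
    "\<forall>m i. \<bar>b1 m i\<bar> \<le> q m \<and> \<bar>b2 m i\<bar> \<le> q m \<and> \<bar>b3 m i\<bar> \<le> q m \<and> \<bar>b4 m i\<bar> \<le> q m"
    using rank1_decomp_rescale[OF e(1), of q q q q] by (auto simp: p_def)
  have "p m \<le> decomp_cost n1 n2 n3 n4 M e1 e2 e3 e4" if "m < M" for m
    unfolding decomp_cost_def p_def[symmetric]
    using that p_nonneg by (intro member_le_sum) auto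
  then have "q m \<le> B" for m
    using e(2) decomp_cost_nonneg by (simp add: q_def B_def)
  then have "\<forall>m i. \<bar>b1 m i\<bar> \<le> B \<and> \<bar>b2 m i\<bar> \<le> B \<and> \<bar>b3 m i\<bar> \<le> B \<and> \<bar>b4 m i\<bar> \<le> B"
    using b(3) by (meson order.trans)
  then show ?thesis
    using b(1,2) e(2) by auto
qed

section \<open>Attainment of the nuclear norm\<close>

lemma continuous_on_apply3 [continuous_intros]:
  "continuous_on S (\<lambda>F :: 'a \<Rightarrow> 'b \<Rightarrow> 'c \<Rightarrow> 'd::topological_space. F c m i)"
proof -
  have "continuous_on S (\<lambda>F :: 'a \<Rightarrow> 'b \<Rightarrow> 'c \<Rightarrow> 'd. F c)"
    by (rule continuous_on_product_then_coordinatewise[OF continuous_on_id])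
  then have "continuous_on S (\<lambda>F :: 'a \<Rightarrow> 'b \<Rightarrow> 'c \<Rightarrow> 'd. F c m)"
    by (rule continuous_on_product_then_coordinatewise)
  then show ?thesis
    by (rule continuous_on_product_then_coordinatewise)
qed

lemma compact_PiE_UNIV:
  fixes S :: "'i \<Rightarrow> 'b::topological_space set"
  assumes "\<And>i. compact (S i)"
  shows "compact (PiE UNIV S)"
proof -
  have "compactin (product_topology (\<lambda>i. euclidean) UNIV) (PiE UNIV S)"
    using assms by (simp add: compactin_PiE)
  then show ?thesis
    by (simp add: euclidean_product_topology)
qed

lemma continuous_on_decomp_cost:
  "continuous_on UNIV (\<lambda>F. decomp_cost n1 n2 n3 n4 M (F 0) (F 1) (F 2) (F 3))"
  unfolding decomp_cost_def vnorm2_def by (intro continuous_intros)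

lemma closed_rank1_decomps:
  "closed {F. is_rank1_decomp n1 n2 n3 n4 X M (F 0) (F 1) (F 2) (F 3)}"
proof -
  have "{F. is_rank1_decomp n1 n2 n3 n4 X M (F 0) (F 1) (F 2) (F 3)} =
     (\<Inter>i1<n1. \<Inter>i2<n2. \<Inter>i3<n3. \<Inter>i4<n4.
        {F. X i1 i2 i3 i4 = (\<Sum>m<M. F 0 m i1 * F 1 m i2 * F 2 m i3 * F 3 m i4)})"
    unfolding is_rank1_decomp_def by auto
  also have "closed \<dots>"
    by (intro closed_INT ballI closed_Collect_eq continuous_intros)
  finally show ?thesis .
qed

definition bounded_decomps ::
  "nat \<Rightarrow> nat \<Rightarrow> nat \<Rightarrow> nat \<Rightarrow> (nat \<Rightarrow> nat \<Rightarrow> nat \<Rightarrow> nat \<Rightarrow> real) \<Rightarrow> nat \<Rightarrow> real \<Rightarrow>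
   (nat \<Rightarrow> nat \<Rightarrow> nat \<Rightarrow> real) set"
  where "bounded_decomps n1 n2 n3 n4 X M B =
    (UNIV \<rightarrow>\<^sub>E UNIV \<rightarrow>\<^sub>E UNIV \<rightarrow>\<^sub>E {-B..B}) \<inter> {F. is_rank1_decomp n1 n2 n3 n4 X M (F 0) (F 1) (F 2) (F 3)}"
text \<open>A point \<open>F\<close> packs the four factor families of a decomposition as \<open>F 0, \<dots>, F 3\<close>; the
  unused families \<open>F c\<close>, \<open>c \<ge> 4\<close>, are bounded as well so that the set is compact.\<close>

lemma compact_bounded_decomps: "compact (bounded_decomps n1 n2 n3 n4 X M B)"
  unfolding bounded_decomps_def
  by (intro compact_Int_closed compact_PiE_UNIV compact_Icc closed_rank1_decomps)

lemma bounded_decomp_of_rank1_decomp: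
  assumes dec: "is_rank1_decomp n1 n2 n3 n4 X r a1 a2 a3 a4"
    and le: "decomp_cost n1 n2 n3 n4 r a1 a2 a3 a4 \<le> c"
  defines "M \<equiv> n1 * n2 * n3 * n4 + 1"
  shows "\<exists>F\<in>bounded_decomps n1 n2 n3 n4 X M (sqrt (sqrt c)).
    decomp_cost n1 n2 n3 n4 M (F 0) (F 1) (F 2) (F 3) = decomp_cost n1 n2 n3 n4 r a1 a2 a3 a4"
proof -
  obtain b1 b2 b3 b4 where b: "is_rank1_decomp n1 n2 n3 n4 X M b1 b2 b3 b4"
    "decomp_cost n1 n2 n3 n4 M b1 b2 b3 b4 = decomp_cost n1 n2 n3 n4 r a1 a2 a3 a4"
    and bound: "\<forall>m i. \<bar>b1 m i\<bar> \<le> sqrt (sqrt (decomp_cost n1 n2 n3 n4 r a1 a2 a3 a4)) \<and>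
      \<bar>b2 m i\<bar> \<le> sqrt (sqrt (decomp_cost n1 n2 n3 n4 r a1 a2 a3 a4)) \<and>
      \<bar>b3 m i\<bar> \<le> sqrt (sqrt (decomp_cost n1 n2 n3 n4 r a1 a2 a3 a4)) \<and>
      \<bar>b4 m i\<bar> \<le> sqrt (sqrt (decomp_cost n1 n2 n3 n4 r a1 a2 a3 a4))"
    using rank1_decomp_short_bounded[OF dec] unfolding M_def by blast
  define F where "F c = (if c = 0 then b1 else if c = 1 then b2 else if c = 2 then b3 else b4)"
    for c :: nat
  have F_factors: "F 0 = b1" "F 1 = b2" "F 2 = b3" "F 3 = b4"
    by (simp_all add: F_def)
  have "sqrt (sqrt (decomp_cost n1 n2 n3 n4 r a1 a2 a3 a4)) \<le> sqrt (sqrt c)"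
    using le by simp
  then have "\<bar>F k m i\<bar> \<le> sqrt (sqrt c)" for k m i
    using bound[rule_format, of m i] unfolding F_def by (auto intro: order.trans)
  then have "F k m i \<in> {- sqrt (sqrt c)..sqrt (sqrt c)}" for k m i
    by (simp add: abs_le_iff minus_le_iff)
  moreover have "is_rank1_decomp n1 n2 n3 n4 X M (F 0) (F 1) (F 2) (F 3)"
    unfolding F_factors by (rule b(1))
  ultimately have "F \<in> bounded_decomps n1 n2 n3 n4 X M (sqrt (sqrt c))"
    by (simp add: bounded_decomps_def PiE_UNIV_domain)
  moreover have "decomp_cost n1 n2 n3 n4 M (F 0) (F 1) (F 2) (F 3) = decomp_cost n1 n2 n3 n4 r a1 a2 a3 a4"
    unfolding F_factors by (rule b(2))
  ultimately show ?thesis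
    by blast
qed

lemma nuclear_norm_attained:
  "\<exists>r a1 a2 a3 a4. is_rank1_decomp n1 n2 n3 n4 X r a1 a2 a3 a4 \<and>
    decomp_cost n1 n2 n3 n4 r a1 a2 a3 a4 = nuclear_norm n1 n2 n3 n4 X"
proof -
  define M where "M = n1 * n2 * n3 * n4 + 1"
  define cost where "cost F = decomp_cost n1 n2 n3 n4 M (F 0) (F 1) (F 2) (F 3)"
    for F :: "nat \<Rightarrow> nat \<Rightarrow> nat \<Rightarrow> real"
  obtain r0 a01 a02 a03 a04 where dec0: "is_rank1_decomp n1 n2 n3 n4 X r0 a01 a02 a03 a04"
    using exists_rank1_decomp by blast
  define c0 where "c0 = decomp_cost n1 n2 n3 n4 r0 a01 a02 a03 a04"
  define K where "K = bounded_decomps n1 n2 n3 n4 X M (sqrt (sqrt c0))"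
  have into_K: "\<exists>F\<in>K. cost F = decomp_cost n1 n2 n3 n4 r a1 a2 a3 a4"
    if "is_rank1_decomp n1 n2 n3 n4 X r a1 a2 a3 a4" "decomp_cost n1 n2 n3 n4 r a1 a2 a3 a4 \<le> c0"
    for r a1 a2 a3 a4
    using bounded_decomp_of_rank1_decomp[OF that] by (simp add: K_def M_def cost_def)
  have "K \<noteq> {}"
    using into_K[OF dec0] by (auto simp: c0_def)
  moreover have "continuous_on K cost"
    unfolding cost_def by (rule continuous_on_subset[OF continuous_on_decomp_cost]) simp
  ultimately obtain F where F: "F \<in> K" "\<And>F'. F' \<in> K \<Longrightarrow> cost F \<le> cost F'"
    using continuous_attains_inf[of K cost] compact_bounded_decomps unfolding K_def by blast
  have dec: "is_rank1_decomp n1 n2 n3 n4 X M (F 0) (F 1) (F 2) (F 3)"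
    using F(1) by (simp add: K_def bounded_decomps_def)
  \<comment> \<open>Decompositions costlier than the initial one are beaten by it.\<close>
  have lower: "cost F \<le> decomp_cost n1 n2 n3 n4 r a1 a2 a3 a4"
    if "is_rank1_decomp n1 n2 n3 n4 X r a1 a2 a3 a4" for r a1 a2 a3 a4
  proof (cases "decomp_cost n1 n2 n3 n4 r a1 a2 a3 a4 \<le> c0")
    case True
    then show ?thesis
      using into_K[OF that] F(2) by fastforce
  next
    case False
    then show ?thesis
      using into_K[OF dec0] F(2) by (fastforce simp: c0_def)
  qed
  have "cost F \<le> nuclear_norm n1 n2 n3 n4 X"
    unfolding nuclear_norm_eq_Inf_decomp_cost
  proof (rule cInf_greatest)
    show "{decomp_cost n1 n2 n3 n4 r a1 a2 a3 a4 | r a1 a2 a3 a4.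
        is_rank1_decomp n1 n2 n3 n4 X r a1 a2 a3 a4} \<noteq> {}"
      using dec0 by blast
  qed (use lower in auto)
  moreover have "nuclear_norm n1 n2 n3 n4 X \<le> cost F"
    unfolding cost_def by (rule nuclear_norm_le_decomp_cost[OF dec])
  ultimately show ?thesis
    using dec unfolding cost_def by (intro exI[of _ M] exI) simp
qed

section \<open>The factorization objective\<close>

lemma matmul_diagm_diagm:
  "matmul D (diagm r) (diagm t) a b = (if a = b \<and> a < D then r a * t a else 0)"
proof -
  have "matmul D (diagm r) (diagm t) a b = (\<Sum>s<D. if s = a then (if a = b then r a * t a else 0) else 0)"
    unfolding matmul_def diagm_def by (rule sum.cong) auto
  then show ?thesis
    by simp
qed

lemma transp_matmul_diagm_diagm: "transp (matmul D (diagm r) (diagm t)) = matmul D (diagm r) (diagm t)"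
  by (intro ext) (auto simp: transp_def matmul_diagm_diagm)

lemma matmul_diag_right:
  assumes "k < D"
  shows "matmul D A (matmul D (diagm r) (diagm t)) i k = A i k * r k * t k"
proof -
  have "matmul D A (matmul D (diagm r) (diagm t)) i k = (\<Sum>s<D. if s = k then A i k * r k * t k else 0)"
    unfolding matmul_def[of D A] matmul_diagm_diagm using assms by (intro sum.cong) auto
  then show ?thesis
    using assms by simp
qed

lemma matmul_diagm_transp_eq_sum:
  "matmul D (matmul D U (matmul D (diagm r) (diagm t))) (transp V) i k = (\<Sum>d<D. U i d * r d * V k d * t d)"
  unfolding matmul_def[of D "matmul D U _"] transp_def
  by (intro sum.cong) (auto simp: matmul_diag_right)

lemma frob_sq_matmul_diag:
  "frob_sq N D (matmul D A (matmul D (diagm r) (diagm t))) =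
    (\<Sum>d<D. (vnorm2 N (\<lambda>i. A i d))\<^sup>2 * (r d)\<^sup>2 * (t d)\<^sup>2)"
  unfolding frob_sq_def vnorm2_power2
  by (subst sum.swap) (auto simp: matmul_diag_right power_mult_distrib sum_distrib_right intro!: sum.cong)

lemma frob_sq_eq_sum_columns: "frob_sq N D A = (\<Sum>d<D. (vnorm2 N (\<lambda>i. A i d))\<^sup>2)"
  unfolding frob_sq_def vnorm2_power2 by (rule sum.swap)

lemma is_factorization_iff_rank1_decomp:
  "is_factorization N1 J N3 L X D U V R T \<longleftrightarrow>
    is_rank1_decomp N1 J N3 L X D (\<lambda>d i. U i d) (\<lambda>d j. R j d) (\<lambda>d k. V k d) (\<lambda>d l. T l d)"
  unfolding is_factorization_def is_rank1_decomp_def slice_def matmul_diagm_transp_eq_sum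
  by (auto simp: mult_ac)

lemma sum_sum_diag_weights:
  fixes A :: "nat \<Rightarrow> real"
  shows "(\<Sum>l<L. \<Sum>j<J. \<Sum>d<D. A d * (R j d)\<^sup>2 * (T l d)\<^sup>2) =
    (\<Sum>d<D. A d * (vnorm2 J (\<lambda>j. R j d) * vnorm2 L (\<lambda>l. T l d))\<^sup>2)"
proof -
  have "(\<Sum>l<L. \<Sum>j<J. \<Sum>d<D. A d * (R j d)\<^sup>2 * (T l d)\<^sup>2) =
      (\<Sum>l<L. \<Sum>d<D. \<Sum>j<J. A d * (R j d)\<^sup>2 * (T l d)\<^sup>2)"
    by (rule sum.cong[OF refl], rule sum.swap)
  also have "\<dots> = (\<Sum>d<D. \<Sum>l<L. \<Sum>j<J. A d * (R j d)\<^sup>2 * (T l d)\<^sup>2)"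
    by (rule sum.swap)
  also have "\<dots> = (\<Sum>d<D. A d * ((\<Sum>l<L. (T l d)\<^sup>2) * (\<Sum>j<J. (R j d)\<^sup>2)))"
    by (simp only: sum_product sum_distrib_left mult_ac)
  finally show ?thesis
    by (simp add: power_mult_distrib vnorm2_power2 mult_ac)
qed

lemma fact_objective_eq_columns:
  fixes N1 J N3 L D :: nat and U V R T :: "nat \<Rightarrow> nat \<Rightarrow> real"
  defines "s \<equiv> sqrt (real J * real L)"
    and "u \<equiv> \<lambda>d. vnorm2 N1 (\<lambda>i. U i d)" and "v \<equiv> \<lambda>d. vnorm2 N3 (\<lambda>k. V k d)"
    and "\<rho> \<equiv> \<lambda>d. vnorm2 J (\<lambda>j. R j d) * vnorm2 L (\<lambda>l. T l d)"
  shows "fact_objective N1 J N3 L D U V R T =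
    (\<Sum>d<D. ((u d)\<^sup>2 * (\<rho> d)\<^sup>2 + s\<^sup>2 * (v d)\<^sup>2 + (v d)\<^sup>2 * (\<rho> d)\<^sup>2 + s\<^sup>2 * (u d)\<^sup>2) / (4 * s))"
proof -
  have s2: "s\<^sup>2 = real J * real L"
    by (simp add: s_def)
  have diag: "(\<Sum>l<L. \<Sum>j<J. frob_sq N D (matmul D A (matmul D (diagm (R j)) (diagm (T l))))) =
      (\<Sum>d<D. (vnorm2 N (\<lambda>i. A i d))\<^sup>2 * (\<rho> d)\<^sup>2)" for N A
    unfolding frob_sq_matmul_diag sum_sum_diag_weights \<rho>_def ..
  have const: "(\<Sum>l<L. \<Sum>j<J. frob_sq N D A) = s\<^sup>2 * (\<Sum>d<D. (vnorm2 N (\<lambda>i. A i d))\<^sup>2)" for N A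
    by (simp add: s2 frob_sq_eq_sum_columns)
  have "(\<Sum>l<L. \<Sum>j<J.
        frob_sq N1 D (matmul D U (matmul D (diagm (R j)) (diagm (T l))))
      + frob_sq N3 D V
      + frob_sq N3 D (matmul D V (transp (matmul D (diagm (R j)) (diagm (T l)))))
      + frob_sq N1 D U) =
    (\<Sum>d<D. (u d)\<^sup>2 * (\<rho> d)\<^sup>2 + s\<^sup>2 * (v d)\<^sup>2 + (v d)\<^sup>2 * (\<rho> d)\<^sup>2 + s\<^sup>2 * (u d)\<^sup>2)"
    unfolding sum.distrib transp_matmul_diagm_diagm diag const
    by (simp add: u_def v_def sum_distrib_left)
  then show ?thesis
    by (simp add: fact_objective_def sum_divide_distrib s_def)
qed

definition balance_defect :: "real \<Rightarrow> real \<Rightarrow> real \<Rightarrow> real \<Rightarrow> real" where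
  "balance_defect s u v \<rho> = ((u * \<rho> - s * v)\<^sup>2 + (v * \<rho> - s * u)\<^sup>2) / (4 * s)"

lemma balance_defect_nonneg: "s > 0 \<Longrightarrow> balance_defect s u v \<rho> \<ge> 0"
  by (simp add: balance_defect_def)

lemma balance_defect_eq_0_iff:
  "s > 0 \<Longrightarrow> balance_defect s u v \<rho> = 0 \<longleftrightarrow> u * \<rho> = s * v \<and> v * \<rho> = s * u"
  by (simp add: balance_defect_def add_nonneg_eq_0_iff)

lemma am_gm_balance_defect:
  "s > 0 \<Longrightarrow> (u\<^sup>2 * \<rho>\<^sup>2 + s\<^sup>2 * v\<^sup>2 + v\<^sup>2 * \<rho>\<^sup>2 + s\<^sup>2 * u\<^sup>2) / (4 * s) = u * v * \<rho> + balance_defect s u v \<rho>"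
  by (simp add: balance_defect_def field_simps power2_eq_square)

definition factorization_defect ::
  "nat \<Rightarrow> nat \<Rightarrow> nat \<Rightarrow> nat \<Rightarrow> nat \<Rightarrow>
   (nat \<Rightarrow> nat \<Rightarrow> real) \<Rightarrow> (nat \<Rightarrow> nat \<Rightarrow> real) \<Rightarrow> (nat \<Rightarrow> nat \<Rightarrow> real) \<Rightarrow> (nat \<Rightarrow> nat \<Rightarrow> real) \<Rightarrow> real"
  where "factorization_defect N1 J N3 L D U V R T =
    (\<Sum>d<D. balance_defect (sqrt (real J * real L)) (vnorm2 N1 (\<lambda>i. U i d)) (vnorm2 N3 (\<lambda>k. V k d))
      (vnorm2 J (\<lambda>j. R j d) * vnorm2 L (\<lambda>l. T l d)))"

lemma factorization_defect_nonneg: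
  "J \<ge> 1 \<Longrightarrow> L \<ge> 1 \<Longrightarrow> factorization_defect N1 J N3 L D U V R T \<ge> 0"
  unfolding factorization_defect_def by (intro sum_nonneg balance_defect_nonneg) simp

lemma factorization_defect_eq_0_iff:
  assumes "J \<ge> 1" "L \<ge> 1"
  shows "factorization_defect N1 J N3 L D U V R T = 0 \<longleftrightarrow>
    (\<forall>d<D. vnorm2 N1 (\<lambda>i. U i d) * vnorm2 J (\<lambda>j. R j d) * vnorm2 L (\<lambda>l. T l d)
        = sqrt (real J * real L) * vnorm2 N3 (\<lambda>k. V k d)
      \<and> vnorm2 N3 (\<lambda>k. V k d) * vnorm2 J (\<lambda>j. R j d) * vnorm2 L (\<lambda>l. T l d)
        = sqrt (real J * real L) * vnorm2 N1 (\<lambda>i. U i d))"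
proof -
  have s: "sqrt (real J * real L) > 0"
    using assms by simp
  show ?thesis
    unfolding factorization_defect_def
    by (auto simp: sum_nonneg_eq_0_iff balance_defect_nonneg[OF s] balance_defect_eq_0_iff[OF s]
        mult.assoc)
qed

lemma fact_objective_eq_cost_plus_defect:
  assumes "J \<ge> 1" "L \<ge> 1"
  shows "fact_objective N1 J N3 L D U V R T =
    decomp_cost N1 J N3 L D (\<lambda>d i. U i d) (\<lambda>d j. R j d) (\<lambda>d k. V k d) (\<lambda>d l. T l d) +
    factorization_defect N1 J N3 L D U V R T"
proof -
  have s: "sqrt (real J * real L) > 0"
    using assms by simp
  show ?thesis
    unfolding fact_objective_eq_columns am_gm_balance_defect[OF s] sum.distrib factorization_defect_def
    by (simp add: decomp_cost_def mult_ac)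
qed

lemma nuclear_norm_plus_defect_le_fact_objective:
  assumes "is_factorization N1 J N3 L X D U V R T" "J \<ge> 1" "L \<ge> 1"
  shows "nuclear_norm N1 J N3 L X + factorization_defect N1 J N3 L D U V R T
    \<le> fact_objective N1 J N3 L D U V R T"
  using nuclear_norm_le_decomp_cost[OF assms(1)[unfolded is_factorization_iff_rank1_decomp]]
  unfolding fact_objective_eq_cost_plus_defect[OF assms(2,3)] by simp

lemma balanced_factorization:
  assumes dec: "is_rank1_decomp N1 J N3 L X r a1 a2 a3 a4" and "J \<ge> 1" "L \<ge> 1"
  shows "\<exists>U V R T. is_factorization N1 J N3 L X r U V R T \<and>
    fact_objective N1 J N3 L r U V R T = decomp_cost N1 J N3 L r a1 a2 a3 a4"
proof -
  define s where "s = sqrt (real J * real L)"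
  have "s > 0"
    using assms by (simp add: s_def)
  define p where "p m = vnorm2 N1 (a1 m) * vnorm2 J (a2 m) * vnorm2 N3 (a3 m) * vnorm2 L (a4 m)" for m
  \<comment> \<open>Rescale each term so that \<open>\<parallel>u\<parallel> = \<parallel>v\<parallel>\<close> and \<open>\<parallel>r\<parallel> \<parallel>t\<parallel> = s\<close>: the equality case of AM-GM.\<close>
  define q where "q m = sqrt (p m / s)" for m
  have "p m \<ge> 0" for m
    by (simp add: p_def vnorm2_nonneg)
  have balanced: "q m * sqrt s * q m * sqrt s = p m" for m
  proof -
    have "q m * sqrt s * q m * sqrt s = (q m * q m) * (sqrt s * sqrt s)"
      by (simp only: mult_ac)
    also have "\<dots> = p m"
      using \<open>p m \<ge> 0\<close> \<open>s > 0\<close> by (simp add: q_def)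
    finally show ?thesis .
  qed
  have q_nonneg: "q m \<ge> 0" and root_nonneg: "sqrt s \<ge> 0" for m :: nat
    using \<open>s > 0\<close> \<open>p m \<ge> 0\<close> by (simp_all add: q_def)
  obtain b1 b2 b3 b4 where b: "is_rank1_decomp N1 J N3 L X r b1 b2 b3 b4"
    "decomp_cost N1 J N3 L r b1 b2 b3 b4 = decomp_cost N1 J N3 L r a1 a2 a3 a4"
    and norms: "\<forall>m<r. (vnorm2 N1 (b1 m), vnorm2 J (b2 m), vnorm2 N3 (b3 m), vnorm2 L (b4 m)) =
      (if q m * sqrt s * q m * sqrt s = 0 then (0, 0, 0, 0) else (q m, sqrt s, q m, sqrt s))"
    using rank1_decomp_rescale[OF dec balanced[unfolded p_def] q_nonneg root_nonneg q_nonneg root_nonneg]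
    by blast
  have "balance_defect s (vnorm2 N1 (b1 d)) (vnorm2 N3 (b3 d)) (vnorm2 J (b2 d) * vnorm2 L (b4 d)) = 0"
    if "d < r" for d
    using norms[rule_format, OF that] \<open>s > 0\<close>
    by (auto simp: balance_defect_def split: if_splits)
  then have "factorization_defect N1 J N3 L r (\<lambda>i d. b1 d i) (\<lambda>k d. b3 d k) (\<lambda>j d. b2 d j) (\<lambda>l d. b4 d l) = 0"
    unfolding factorization_defect_def s_def[symmetric] by (intro sum.neutral) simp
  then have "fact_objective N1 J N3 L r (\<lambda>i d. b1 d i) (\<lambda>k d. b3 d k) (\<lambda>j d. b2 d j) (\<lambda>l d. b4 d l) =
      decomp_cost N1 J N3 L r a1 a2 a3 a4"
    using fact_objective_eq_cost_plus_defect[OF assms(2,3)] b(2) by simp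
  moreover have "is_factorization N1 J N3 L X r (\<lambda>i d. b1 d i) (\<lambda>k d. b3 d k) (\<lambda>j d. b2 d j) (\<lambda>l d. b4 d l)"
    using b(1) by (simp add: is_factorization_iff_rank1_decomp)
  ultimately show ?thesis
    by blast
qed

theorem theorem2:
  fixes N1 J N3 L :: nat
    and X :: "nat \<Rightarrow> nat \<Rightarrow> nat \<Rightarrow> nat \<Rightarrow> real"
  assumes "N1 \<ge> 1" "J \<ge> 1" "N3 \<ge> 1" "L \<ge> 1"
  shows "(\<exists>D U V R T. is_factorization N1 J N3 L X D U V R T \<and>
            fact_objective N1 J N3 L D U V R T = nuclear_norm N1 J N3 L X)
       \<and> (\<forall>D U V R T. is_factorization N1 J N3 L X D U V R T \<longrightarrow>
            nuclear_norm N1 J N3 L X \<le> fact_objective N1 J N3 L D U V R T)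
       \<and> (\<forall>D U V R T. is_factorization N1 J N3 L X D U V R T \<and>
            fact_objective N1 J N3 L D U V R T = nuclear_norm N1 J N3 L X \<longrightarrow>
            (\<forall>d<D.
               vnorm2 N1 (\<lambda>i. U i d) * vnorm2 J (\<lambda>j. R j d) * vnorm2 L (\<lambda>l. T l d)
                 = sqrt (real J * real L) * vnorm2 N3 (\<lambda>k. V k d)
             \<and> vnorm2 N3 (\<lambda>k. V k d) * vnorm2 J (\<lambda>j. R j d) * vnorm2 L (\<lambda>l. T l d)
                 = sqrt (real J * real L) * vnorm2 N1 (\<lambda>i. U i d)))"
proof (intro conjI allI impI)
  have J: "J \<ge> 1" and L: "L \<ge> 1"
    using assms by auto
  show "\<exists>D U V R T. is_factorization N1 J N3 L X D U V R T \<and>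
      fact_objective N1 J N3 L D U V R T = nuclear_norm N1 J N3 L X"
    using nuclear_norm_attained balanced_factorization[OF _ J L] by metis
  show "nuclear_norm N1 J N3 L X \<le> fact_objective N1 J N3 L D U V R T"
    if "is_factorization N1 J N3 L X D U V R T" for D U V R T
    using nuclear_norm_plus_defect_le_fact_objective[OF that J L]
      factorization_defect_nonneg[OF J L, of N1 N3 D U V R T] by linarith
  fix D U V R T d
  assume opt: "is_factorization N1 J N3 L X D U V R T \<and>
    fact_objective N1 J N3 L D U V R T = nuclear_norm N1 J N3 L X" and "d < D"
  then have "factorization_defect N1 J N3 L D U V R T = 0"
    using nuclear_norm_plus_defect_le_fact_objective[OF conjunct1[OF opt] J L]
      factorization_defect_nonneg[OF J L, of N1 N3 D U V R T] by linarith
  then show "vnorm2 N1 (\<lambda>i. U i d) * vnorm2 J (\<lambda>j. R j d) * vnorm2 L (\<lambda>l. T l d)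
      = sqrt (real J * real L) * vnorm2 N3 (\<lambda>k. V k d)"
    and "vnorm2 N3 (\<lambda>k. V k d) * vnorm2 J (\<lambda>j. R j d) * vnorm2 L (\<lambda>l. T l d)
      = sqrt (real J * real L) * vnorm2 N1 (\<lambda>i. U i d)"
    using \<open>d < D\<close> by (simp_all add: factorization_defect_eq_0_iff[OF J L])
qed

end
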